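(* Let $q\geq 3$ be an odd prime power and $m\geq 2$ an integer with $q^m\geq 25$. Then the third largest odd coset leader modulo $q^m-1$ is $$\delta_3=\begin{cases}(q-1)q^{m-1}-q^{\lceil\frac{2m-1}{3}\rceil}-q^{\lfloor\frac{m}{3}-1\rfloor}-1 & \text{if } 3\nmid(m+1),\\ (q-1)q^{m-1}-q^{\frac{2m-1}{3}}-q^{\frac{m+1}{3}}-1 & \text{if } 3\mid(m+1).\end{cases}$$ Moreover, $|C_{\delta_3}^{(q,q^m-1)}|=m$.
   Context: $C_i^{(q,N)}=\{i,iq,iq^2,\ldots\}\bmod N$ denotes the $q$-cyclotomic coset of $i$ modulo $N$; its smallest element is its coset leader. An odd coset leader modulo $N$ is a coset leader that is an odd integer. *)

theory Defs
  imports "HOL-Computational_Algebra.Primes"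
begin

definition cyc_coset :: "nat \<Rightarrow> nat \<Rightarrow> nat \<Rightarrow> nat set" where
  "cyc_coset q N i = {(i * q ^ j) mod N | j. True}"

definition is_coset_leader :: "nat \<Rightarrow> nat \<Rightarrow> nat \<Rightarrow> bool" where
  "is_coset_leader q N i \<longleftrightarrow> i < N \<and> i = Min (cyc_coset q N i)"

definition odd_coset_leaders :: "nat \<Rightarrow> nat \<Rightarrow> nat set" where
  "odd_coset_leaders q N = {i. is_coset_leader q N i \<and> odd i}"

definition kth_largest :: "nat \<Rightarrow> nat set \<Rightarrow> nat" where
  "kth_largest k A = rev (sorted_list_of_set A) ! (k - 1)"

end

theory Submission
  imports Defs "HOL-Number_Theory.Cong" "HOL-Library.Product_Lexorder"
begin

(*
  Put N = q ^ m - 1. Since (N - y) * q ^ j = N - y * q ^ j modulo N, the number N - y is a coset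
  leader iff y is the largest element of its coset, and for odd q the parities of N - y and y agree.
  So the third largest odd coset leader is N - y for the third smallest odd coset maximum y.
  Multiplication by q ^ j rotates the m base-q digits of y cyclically, hence no digit of a coset
  maximum exceeds its leading one; below 2 * q ^ (m - 1) a coset maximum is therefore a sum of
  distinct powers q ^ i over an exponent set A of odd size that contains m - 1 and is maximal among
  its cyclic rotations. Rotating two elements of A into the top two positions shows that their cyclic
  distance is at least m - 1 - p, where p is the second largest exponent. Below the claimed third
  value this leaves, besides {m - 1}, a single three-element set depending on m mod 3, and the claimed
  value itself is a coset maximum whose coset has m elements.
*)

section \<open>Sums of distinct powers\<close>

definition pow_sum :: "nat \<Rightarrow> nat set \<Rightarrow> nat" where
  "pow_sum q A = (\<Sum>i\<in>A. q ^ i)"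

lemma pow_sum_empty [simp]: "pow_sum q {} = 0"
  by (simp add: pow_sum_def)

lemma pow_sum_insert [simp]:
  "finite A \<Longrightarrow> e \<notin> A \<Longrightarrow> pow_sum q (insert e A) = q ^ e + pow_sum q A"
  by (simp add: pow_sum_def)

lemma pow_sum_mono: "finite B \<Longrightarrow> A \<subseteq> B \<Longrightarrow> pow_sum q A \<le> pow_sum q B"
  unfolding pow_sum_def by (rule sum_mono2) auto

lemma power_le_pow_sum: "finite A \<Longrightarrow> e \<in> A \<Longrightarrow> q ^ e \<le> pow_sum q A"
  unfolding pow_sum_def by (rule member_le_sum) auto

lemma pow_sum_three:
  "v < u \<Longrightarrow> u < w \<Longrightarrow> pow_sum q {w, u, v} = q ^ w + q ^ u + q ^ v"
  by (simp add: pow_sum_def)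

lemma odd_pow_sum_iff:
  assumes "odd q" and "finite A"
  shows "odd (pow_sum q A) \<longleftrightarrow> odd (card A)"
  using assms(2) by (induction A rule: finite_induct) (simp_all add: assms(1))

lemma pow_sum_geometric_bound:
  assumes "q \<ge> 1" and "A \<subseteq> {..<e}"
  shows "(q - 1) * pow_sum q A < q ^ e"
  using assms(2)
proof (induction e arbitrary: A)
  case 0
  then show ?case by (simp add: pow_sum_def)
next
  case (Suc e)
  have fin: "finite (A - {e})"
    using Suc.prems finite_subset by blast
  have "A - {e} \<subseteq> {..<e}"
    using Suc.prems by auto
  then have IH: "(q - 1) * pow_sum q (A - {e}) < q ^ e"
    by (rule Suc.IH)
  have "pow_sum q A \<le> pow_sum q (insert e (A - {e}))"
    using fin by (intro pow_sum_mono) auto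
  also have "\<dots> = q ^ e + pow_sum q (A - {e})"
    by (rule pow_sum_insert[OF fin]) simp
  finally have "(q - 1) * pow_sum q A \<le> (q - 1) * q ^ e + (q - 1) * pow_sum q (A - {e})"
    by (metis distrib_left mult_le_mono2)
  also have "\<dots> < (q - 1) * q ^ e + q ^ e"
    using IH by simp
  also have "\<dots> = q ^ Suc e"
    using assms(1) by (cases q) simp_all
  finally show ?case .
qed

lemma pow_sum_less_power:
  assumes "q \<ge> 2" and "A \<subseteq> {..<e}"
  shows "pow_sum q A < q ^ e"
proof -
  have "1 * pow_sum q A \<le> (q - 1) * pow_sum q A"
    using assms(1) by (intro mult_le_mono1) simp
  then show ?thesis
    using pow_sum_geometric_bound[of q A e] assms by linarith
qed

lemma pow_sum_below_less:
  assumes "q \<ge> 2" and "R \<subseteq> {..<w}" and "finite S" and "w \<in> S"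
  shows "pow_sum q R < pow_sum q S"
  using pow_sum_less_power[OF assms(1,2)] power_le_pow_sum[OF assms(3,4), of q] by simp

lemma pow_sum_less_Mersenne:
  assumes "q \<ge> 3" and "m \<ge> 1" and "A \<subseteq> {..<m}"
  shows "pow_sum q A < q ^ m - 1"
proof -
  have "2 * pow_sum q A \<le> (q - 1) * pow_sum q A"
    using assms(1) by (intro mult_right_mono) auto
  moreover have "(q - 1) * pow_sum q A < q ^ m"
    using assms(1,3) by (intro pow_sum_geometric_bound) auto
  moreover have "q ^ m \<ge> 3"
    using assms(1,2) power_increasing[of 1 m q] by simp
  ultimately show ?thesis
    using assms(1) by linarith
qed

lemma pow_sum_less_top_two:
  assumes "q \<ge> 2" and "A \<subseteq> {..<m}" and "p < m - 1" and "\<forall>i\<in>A. i \<noteq> m - 1 \<longrightarrow> i \<le> p"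
  shows "pow_sum q A < q ^ (m - 1) + q ^ (p + 1)"
proof -
  have "A \<subseteq> insert (m - 1) {..<p + 1}"
    using assms(4) by auto
  then have "pow_sum q A \<le> pow_sum q (insert (m - 1) {..<p + 1})"
    by (rule pow_sum_mono[rotated]) simp
  also have "\<dots> = q ^ (m - 1) + pow_sum q {..<p + 1}"
    using assms(3) by simp
  also have "\<dots> < q ^ (m - 1) + q ^ (p + 1)"
    using pow_sum_less_power[OF assms(1), of "{..<p + 1}" "p + 1"] by simp
  finally show ?thesis .
qed

lemma exponent_bounds_below_two_powers:
  assumes "q \<ge> 2" and "b < a" and less: "q ^ p + pow_sum q L < q ^ a + q ^ b"
  shows "p \<le> a" and "p = a \<Longrightarrow> finite L \<Longrightarrow> e \<in> L \<Longrightarrow> e < b"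
proof -
  show "p \<le> a"
  proof (rule ccontr)
    assume "\<not> p \<le> a"
    then have "q ^ (a + 1) \<le> q ^ p"
      using assms(1) by (intro power_increasing) auto
    moreover have "q ^ b < q ^ a"
      using assms(1,2) by (intro power_strict_increasing) auto
    moreover have "2 * q ^ a \<le> q ^ (a + 1)"
      using assms(1) by simp
    ultimately show False
      using less by linarith
  qed
  assume "p = a" "finite L" "e \<in> L"
  then have "pow_sum q L < q ^ b"
    using less by simp
  then have "q ^ e < q ^ b"
    using power_le_pow_sum[OF \<open>finite L\<close> \<open>e \<in> L\<close>, of q] by linarith
  then show "e < b"
    by (rule power_less_imp_less_exp[rotated]) (use assms(1) in simp)
qed

lemma pow_sum_three_less:
  fixes q w u v u' v' :: nat
  assumes "q \<ge> 2" and "v < u" "u < w" and "v' < u'" "u' < w" and "(u', v') < (u, v)"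
  shows "pow_sum q {w, u', v'} < pow_sum q {w, u, v}"
proof -
  have "q ^ u' + q ^ v' < q ^ u + q ^ v"
  proof (cases "u' < u")
    case True
    have "q ^ u' + q ^ v' < 2 * q ^ u'"
      using assms(1,4) by (simp add: power_strict_increasing)
    also have "\<dots> \<le> q ^ (u' + 1)"
      using assms(1) by simp
    also have "\<dots> \<le> q ^ u"
      using assms(1) True by (intro power_increasing) auto
    finally show ?thesis
      by simp
  next
    case False
    then have "u' = u" "v' < v"
      using assms(6) by auto
    then show ?thesis
      using assms(1) by (simp add: power_strict_increasing)
  qed
  then show ?thesis
    using assms(2-5) by (simp add: pow_sum_three)
qed

lemma pow_sum_three_less_iff:
  fixes q w u v u' v' :: nat
  assumes "q \<ge> 2" and "v < u" "u < w" and "v' < u'" "u' < w"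
  shows "pow_sum q {w, u', v'} < pow_sum q {w, u, v} \<longleftrightarrow> (u', v') < (u, v)"
proof
  assume sum_less: "pow_sum q {w, u', v'} < pow_sum q {w, u, v}"
  show "(u', v') < (u, v)"
  proof (rule ccontr)
    assume "\<not> (u', v') < (u, v)"
    then consider "(u, v) < (u', v')" | "(u', v') = (u, v)"
      by (auto simp only: not_less_iff_gr_or_eq)
    then show False
      using pow_sum_three_less[OF assms(1,4,5,2,3)] sum_less by cases auto
  qed
qed (rule pow_sum_three_less[OF assms])

lemma pow_sum_three_le_iff:
  fixes q w u v u' v' :: nat
  assumes "q \<ge> 2" and "v < u" "u < w" and "v' < u'" "u' < w"
  shows "pow_sum q {w, u', v'} \<le> pow_sum q {w, u, v} \<longleftrightarrow> (u', v') \<le> (u, v)"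
  using pow_sum_three_less_iff[OF assms(1,4,5,2,3)] by (simp add: not_less[symmetric])

lemma three_powers_le_two_top_plus_one:
  fixes q m a b :: nat
  assumes "q \<ge> 2" and "b < a" and "a < m - 1 \<or> (a = m - 1 \<and> b = 0)"
  shows "q ^ (m - 1) + q ^ a + q ^ b \<le> 2 * q ^ (m - 1) + 1"
  using assms(3)
proof
  assume "a < m - 1"
  have "q ^ a + q ^ b \<le> 2 * q ^ a"
    using assms(1,2) by (simp add: power_increasing)
  also have "\<dots> \<le> q ^ (a + 1)"
    using assms(1) by simp
  also have "\<dots> \<le> q ^ (m - 1)"
    using assms(1) \<open>a < m - 1\<close> by (intro power_increasing) auto
  finally show ?thesis
    by simp
qed simp

section \<open>Cyclic rotations of exponent sets\<close>

definition rotate_set :: "nat \<Rightarrow> nat \<Rightarrow> nat set \<Rightarrow> nat set" where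
  "rotate_set m j A = (\<lambda>i. (i + j) mod m) ` A"

definition rotation_maximal :: "nat \<Rightarrow> nat \<Rightarrow> nat set \<Rightarrow> bool" where
  "rotation_maximal q m A \<longleftrightarrow> (\<forall>j. pow_sum q (rotate_set m j A) \<le> pow_sum q A)"

lemma rotate_set_subset: "0 < m \<Longrightarrow> rotate_set m j A \<subseteq> {..<m}"
  unfolding rotate_set_def by auto

lemma rotate_set_mod: "rotate_set m (j mod m) A = rotate_set m j A"
  unfolding rotate_set_def by (simp add: mod_add_right_eq)

lemma rotate_set_zero: "A \<subseteq> {..<m} \<Longrightarrow> rotate_set m 0 A = A"
  unfolding rotate_set_def by (auto simp: subset_iff)

lemma inj_on_rotate:
  fixes m j :: nat
  assumes "A \<subseteq> {..<m}"
  shows "inj_on (\<lambda>i. (i + j) mod m) A"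
proof
  fix x y
  assume "x \<in> A" "y \<in> A" "(x + j) mod m = (y + j) mod m"
  then have "[x + j = y + j] (mod m)"
    by (simp add: cong_def)
  then have "[x = y] (mod m)"
    by (simp add: cong_add_rcancel_nat)
  moreover have "x < m" "y < m"
    using \<open>x \<in> A\<close> \<open>y \<in> A\<close> assms by auto
  ultimately show "x = y"
    by (simp add: cong_def)
qed

lemma subset_lessThan_pred:
  fixes m :: nat
  assumes "R \<subseteq> {..<m}" and "m - 1 \<notin> R"
  shows "R \<subseteq> {..<m - 1}"
proof
  fix z
  assume "z \<in> R"
  then have "z < m" "z \<noteq> m - 1"
    using assms by auto
  then show "z \<in> {..<m - 1}"
    by simp
qed

lemma rotate_to_top_position:
  fixes m x e :: nat
  assumes "x < m" and "e < m" and "x \<noteq> e"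
  shows "(x + (m - 1 - e)) mod m = m - 1 - (e + m - x) mod m"
proof (cases "x < e")
  case True
  then have "(e + m - x) mod m = e - x" and "x + (m - 1 - e) < m"
    using assms by (simp_all add: mod_if)
  then show ?thesis
    using True assms by simp
next
  case False
  then have "(e + m - x) mod m = e + m - x" and "(x + (m - 1 - e)) mod m = x - e - 1"
    using assms by (simp_all add: mod_if)
  then show ?thesis
    using False assms by simp
qed

lemma rotate_to_top_unique:
  fixes x j m :: nat
  assumes "x < m" and "j < m" and "(x + j) mod m = m - 1"
  shows "j = m - 1 - x"
proof (cases "x + j < m")
  case True
  then show ?thesis
    using assms by simp
next
  case False
  then have "(x + j) mod m = x + j - m"
    using assms(1,2) by (simp add: mod_if)
  then show ?thesis
    using assms by linarith
qed

lemma rotation_maximal_top: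
  assumes "q \<ge> 1" and "m \<ge> 1"
  shows "rotation_maximal q m {m - 1}"
  unfolding rotation_maximal_def
proof
  fix j
  have "(m - 1 + j) mod m \<le> m - 1"
    using assms(2) by (simp add: less_Suc_eq_le[symmetric])
  then have "q ^ ((m - 1 + j) mod m) \<le> q ^ (m - 1)"
    using assms(1) by (rule power_increasing)
  then show "pow_sum q (rotate_set m j {m - 1}) \<le> pow_sum q {m - 1}"
    by (simp add: rotate_set_def pow_sum_def)
qed

section \<open>Multiplication by powers of q modulo q ^ m - 1\<close>

lemma power_cong_one_Mersenne:
  fixes q m :: nat
  assumes "q \<ge> 1"
  shows "[q ^ m = 1] (mod q ^ m - 1)"
  using assms by (simp add: cong_def le_mod_geq)

lemma power_cong_power_mod:
  fixes q m k :: nat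
  assumes "q \<ge> 1"
  shows "[q ^ k = q ^ (k mod m)] (mod q ^ m - 1)"
proof -
  have "[(q ^ m) ^ (k div m) * q ^ (k mod m) = 1 ^ (k div m) * q ^ (k mod m)] (mod q ^ m - 1)"
    by (intro cong_mult cong_pow cong_refl power_cong_one_Mersenne assms)
  then show ?thesis
    by (simp flip: power_mult power_add)
qed

lemma mult_power_mod_Mersenne_mod:
  fixes q m x j :: nat
  assumes "q \<ge> 1"
  shows "x * q ^ j mod (q ^ m - 1) = x * q ^ (j mod m) mod (q ^ m - 1)"
  using cong_scalar_left[OF power_cong_power_mod[OF assms, of j m], of x] by (simp add: cong_def)

lemma pow_sum_mult_power_mod:
  assumes "q \<ge> 3" and "m \<ge> 1" and "A \<subseteq> {..<m}"
  shows "pow_sum q A * q ^ j mod (q ^ m - 1) = pow_sum q (rotate_set m j A)"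
proof -
  have "pow_sum q A * q ^ j = (\<Sum>i\<in>A. q ^ (i + j))"
    unfolding pow_sum_def by (simp add: sum_distrib_right power_add)
  moreover have "[(\<Sum>i\<in>A. q ^ (i + j)) = (\<Sum>i\<in>A. q ^ ((i + j) mod m))] (mod q ^ m - 1)"
    using assms(1) by (intro cong_sum power_cong_power_mod) auto
  moreover have "(\<Sum>i\<in>A. q ^ ((i + j) mod m)) = pow_sum q (rotate_set m j A)"
    unfolding pow_sum_def rotate_set_def by (simp add: sum.reindex[OF inj_on_rotate[OF assms(3)]])
  moreover have "pow_sum q (rotate_set m j A) < q ^ m - 1"
    using assms by (intro pow_sum_less_Mersenne rotate_set_subset) auto
  ultimately show ?thesis
    by (simp add: cong_def)
qed

lemma coprime_Mersenne_power:
  fixes q m j :: nat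
  assumes "q \<ge> 1" and "m \<ge> 1"
  shows "coprime (q ^ m - 1) (q ^ j)"
proof -
  have "q ^ m > 0"
    using assms(1) by simp
  then have "coprime (q ^ m - 1) (q ^ m)"
    by (rule coprime_diff_one_left_nat)
  moreover have "q ^ m = q * q ^ (m - 1)"
    using assms(2) by (simp flip: power_Suc)
  ultimately have "coprime (q ^ m - 1) q"
    by (metis coprime_mult_right_iff)
  then show ?thesis
    by simp
qed

lemma Mersenne_not_dvd_mult_power:
  fixes q m y j :: nat
  assumes "q \<ge> 1" and "0 < y" and "y < q ^ m - 1"
  shows "\<not> q ^ m - 1 dvd y * q ^ j"
proof
  assume "q ^ m - 1 dvd y * q ^ j"
  moreover have "m \<ge> 1"
    using assms(3) by (cases m) auto
  ultimately have "q ^ m - 1 dvd y"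
    using coprime_Mersenne_power[OF assms(1)] by (metis coprime_dvd_mult_left_iff)
  then show False
    using assms(2,3) by (auto dest: dvd_imp_le)
qed

lemma rotated_digits_less_power:
  fixes q m y j :: nat
  assumes "q \<ge> 1" and "y < q ^ m" and "j \<le> m"
  shows "(y mod q ^ (m - j)) * q ^ j + y div q ^ (m - j) < q ^ m"
proof -
  have qm: "q ^ m = q ^ (m - j) * q ^ j"
    using assms(3) by (simp flip: power_add)
  then have "y < q ^ j * q ^ (m - j)"
    using assms(2) by (simp add: mult.commute)
  then have "y div q ^ (m - j) < q ^ j"
    using assms(1) by (simp add: div_less_iff_less_mult)
  moreover have "y mod q ^ (m - j) < q ^ (m - j)"
    using assms(1) by simp
  then have "(y mod q ^ (m - j) + 1) * q ^ j \<le> q ^ m"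
    unfolding qm by (intro mult_right_mono) simp_all
  ultimately show ?thesis
    by (simp add: algebra_simps)
qed

lemma mult_power_mod_Mersenne:
  fixes q m y j :: nat
  assumes "q \<ge> 1" and "y < q ^ m - 1" and "j \<le> m"
  shows "y * q ^ j mod (q ^ m - 1) = (y mod q ^ (m - j)) * q ^ j + y div q ^ (m - j)"
proof -
  define N where "N = q ^ m - 1"
  define a where "a = y div q ^ (m - j)"
  define b where "b = y mod q ^ (m - j)"
  have "y = a * q ^ (m - j) + b"
    unfolding a_def b_def by (rule div_mult_mod_eq[symmetric])
  then have "[y * q ^ j = a * q ^ m + b * q ^ j] (mod N)"
    using assms(3) by (simp add: algebra_simps flip: power_add)
  also have "[a * q ^ m + b * q ^ j = a * 1 + b * q ^ j] (mod N)"
    unfolding N_def by (intro cong_add cong_mult cong_refl power_cong_one_Mersenne assms(1))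
  finally have cong: "[y * q ^ j = a + b * q ^ j] (mod N)"
    by simp
  have "y < q ^ m"
    using assms(2) by linarith
  then have "b * q ^ j + a < q ^ m"
    unfolding a_def b_def by (rule rotated_digits_less_power[OF assms(1) _ assms(3)])
  moreover have "a + b * q ^ j \<noteq> N"
  proof (cases "y = 0")
    case True
    then show ?thesis
      using assms(2) unfolding a_def b_def N_def by simp
  next
    case False
    then have "\<not> N dvd y * q ^ j"
      using Mersenne_not_dvd_mult_power[OF assms(1) _ assms(2)] unfolding N_def by simp
    with cong show ?thesis
      by (auto simp: cong_def dvd_eq_mod_eq_0)
  qed
  ultimately have "a + b * q ^ j < N"
    unfolding N_def by linarith
  with cong show ?thesis
    unfolding N_def a_def b_def by (simp add: cong_def)
qed

lemma complement_mult_power_mod: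
  fixes q m y j :: nat
  assumes "q \<ge> 1" and "0 < y" and "y < q ^ m - 1"
  shows "(q ^ m - 1 - y) * q ^ j mod (q ^ m - 1) = q ^ m - 1 - y * q ^ j mod (q ^ m - 1)"
proof -
  define N where "N = q ^ m - 1"
  define u where "u = y * q ^ j mod N"
  define w where "w = (N - y) * q ^ j mod N"
  have "\<not> N dvd y * q ^ j"
    using Mersenne_not_dvd_mult_power[OF assms] unfolding N_def .
  then have "0 < u" "u < N"
    using assms(3) unfolding u_def N_def by (auto simp: dvd_eq_mod_eq_0)
  have "w < N"
    using \<open>u < N\<close> unfolding w_def by simp
  have "(N - y) * q ^ j + y * q ^ j = N * q ^ j"
    using assms(3) unfolding N_def by (simp flip: add_mult_distrib)
  then have "N dvd w + u"
    unfolding u_def w_def by (simp add: dvd_eq_mod_eq_0 mod_add_eq)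
  then obtain k where k: "w + u = N * k"
    by (elim dvdE)
  have "N * k < N * 2" "0 < N * k"
    using k \<open>w < N\<close> \<open>0 < u\<close> \<open>u < N\<close> by linarith+
  then have "k = 1"
    by simp
  then show ?thesis
    using k unfolding N_def u_def w_def by simp
qed

lemma sum_base_digits:
  fixes q y m :: nat
  assumes "q > 0" and "y < q ^ m"
  shows "y = (\<Sum>i<m. (y div q ^ i mod q) * q ^ i)"
  using assms(2)
proof (induction m arbitrary: y)
  case 0
  then show ?case by simp
next
  case (Suc m)
  have "y div q < q ^ m"
    using Suc.prems assms(1) by (simp add: div_less_iff_less_mult mult.commute)
  then have IH: "y div q = (\<Sum>i<m. (y div q div q ^ i mod q) * q ^ i)"
    by (rule Suc.IH)
  have "(\<Sum>i<Suc m. (y div q ^ i mod q) * q ^ i)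
      = y mod q + (\<Sum>i<m. (y div q ^ Suc i mod q) * q ^ Suc i)"
    by (simp only: sum.lessThan_Suc_shift) simp
  also have "(\<Sum>i<m. (y div q ^ Suc i mod q) * q ^ Suc i)
      = q * (\<Sum>i<m. (y div q div q ^ i mod q) * q ^ i)"
    by (simp add: sum_distrib_left div_mult2_eq algebra_simps)
  also have "\<dots> = q * (y div q)"
    using IH by simp
  finally show ?case
    by simp
qed

lemma eq_pow_sum_binary_digits:
  fixes q y m :: nat
  assumes "q > 0" and "y < q ^ m" and "\<And>i. i < m \<Longrightarrow> y div q ^ i mod q \<le> 1"
  shows "y = pow_sum q {i. i < m \<and> y div q ^ i mod q = 1}"
proof -
  have "y = (\<Sum>i<m. (y div q ^ i mod q) * q ^ i)"
    using assms(1,2) by (rule sum_base_digits)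
  also have "\<dots> = (\<Sum>i<m. if y div q ^ i mod q = 1 then q ^ i else 0)"
    using assms(3) by (intro sum.cong refl) (metis le_neq_implies_less less_one lessThan_iff mult_1 mult_0)
  also have "\<dots> = pow_sum q {i. i < m \<and> y div q ^ i mod q = 1}"
    unfolding pow_sum_def by (simp add: sum.If_cases lessThan_def Collect_conj_eq Int_commute)
  finally show ?thesis .
qed

lemma digit_le_leading_digit:
  fixes q m y i :: nat
  assumes "q \<ge> 1" and "y < q ^ m - 1" and "i < m"
    and "y * q ^ (m - 1 - i) mod (q ^ m - 1) \<le> y"
  shows "y div q ^ i mod q \<le> y div q ^ (m - 1)"
proof -
  define j where "j = m - 1 - i"
  define r where "r = y * q ^ j mod (q ^ m - 1)"
  have "m = (i + 1) + j" "m - 1 = j + i"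
    using assms(3) unfolding j_def by simp_all
  then have q_pow: "q ^ m = q ^ (i + 1) * q ^ j" "q ^ (m - 1) = q ^ j * q ^ i"
    by (metis power_add)+
  have "y < q ^ j * q ^ (i + 1)"
    using assms(2) q_pow(1) by (simp add: mult.commute)
  then have "y div q ^ (i + 1) < q ^ j"
    using assms(1) by (simp add: div_less_iff_less_mult)
  moreover have "r = (y mod q ^ (i + 1)) * q ^ j + y div q ^ (i + 1)"
    using mult_power_mod_Mersenne[OF assms(1,2), of j] assms(3) unfolding r_def j_def by simp
  ultimately have "r div q ^ j = y mod q ^ (i + 1)"
    using assms(1) by simp
  also have "y mod q ^ (i + 1) = q ^ i * (y div q ^ i mod q) + y mod q ^ i"
    by (metis mod_mult2_eq power_Suc2 Suc_eq_plus1)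
  finally have "r div q ^ (m - 1) = y div q ^ i mod q"
    unfolding q_pow(2) div_mult2_eq using assms(1) by simp
  moreover have "r div q ^ (m - 1) \<le> y div q ^ (m - 1)"
    using assms(4) unfolding r_def j_def by (rule div_le_mono)
  ultimately show ?thesis
    by simp
qed

section \<open>Coset leaders and odd coset maxima\<close>

lemma is_coset_leader_iff:
  assumes "x < N"
  shows "is_coset_leader q N x \<longleftrightarrow> (\<forall>j. x \<le> x * q ^ j mod N)"
proof -
  let ?C = "cyc_coset q N x"
  have "?C \<subseteq> {..<N}"
    using assms unfolding cyc_coset_def by auto
  then have "finite ?C"
    by (rule finite_subset) simp
  moreover have "x \<in> ?C"
    using assms unfolding cyc_coset_def by (auto intro: exI[of _ 0])
  ultimately have "x = Min ?C \<longleftrightarrow> (\<forall>z\<in>?C. x \<le> z)"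
    using Min_eq_iff[of ?C x] by (metis empty_iff)
  then show ?thesis
    using assms unfolding is_coset_leader_def cyc_coset_def by blast
qed

lemma is_coset_leader_complement_iff:
  fixes q m y :: nat
  assumes "q \<ge> 1" and "0 < y" and "y < q ^ m - 1"
  shows "is_coset_leader q (q ^ m - 1) (q ^ m - 1 - y) \<longleftrightarrow> (\<forall>j. y * q ^ j mod (q ^ m - 1) \<le> y)"
proof -
  let ?N = "q ^ m - 1"
  have "is_coset_leader q ?N (?N - y) \<longleftrightarrow> (\<forall>j. ?N - y \<le> (?N - y) * q ^ j mod ?N)"
    by (intro is_coset_leader_iff) (use assms(2,3) in linarith)
  also have "\<dots> \<longleftrightarrow> (\<forall>j. ?N - y \<le> ?N - y * q ^ j mod ?N)"
    by (simp only: complement_mult_power_mod[OF assms])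
  also have "\<dots> \<longleftrightarrow> (\<forall>j. y * q ^ j mod ?N \<le> y)"
  proof -
    have "?N - y \<le> ?N - y * q ^ j mod ?N \<longleftrightarrow> y * q ^ j mod ?N \<le> y" for j
      using assms(3) mod_less_divisor[of ?N "y * q ^ j"] by linarith
    then show ?thesis
      by simp
  qed
  finally show ?thesis .
qed

lemma cyc_coset_eq_image:
  fixes q m x :: nat
  assumes "q \<ge> 1" and "m \<ge> 1"
  shows "cyc_coset q (q ^ m - 1) x = (\<lambda>j. x * q ^ j mod (q ^ m - 1)) ` {..<m}"
proof -
  have "x * q ^ j mod (q ^ m - 1) \<in> (\<lambda>j. x * q ^ j mod (q ^ m - 1)) ` {..<m}" for j
    using assms by (subst mult_power_mod_Mersenne_mod) auto
  then show ?thesis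
    unfolding cyc_coset_def by auto
qed

lemma card_cyc_coset:
  fixes q m x :: nat
  assumes "q \<ge> 1" and "x < q ^ m - 1"
    and rotate_ne: "\<And>j. 0 < j \<Longrightarrow> j < m \<Longrightarrow> x * q ^ j mod (q ^ m - 1) \<noteq> x"
  shows "card (cyc_coset q (q ^ m - 1) x) = m"
proof -
  let ?N = "q ^ m - 1"
  have "m \<ge> 1"
    using assms(2) by (cases m) auto
  have neq: "x * q ^ i mod ?N \<noteq> x * q ^ k mod ?N" if "i < k" "k < m" for i k
  proof
    assume "x * q ^ i mod ?N = x * q ^ k mod ?N"
    then have "[x * q ^ i * q ^ (m - k) = x * q ^ k * q ^ (m - k)] (mod ?N)"
      by (intro cong_scalar_right) (simp add: cong_def)
    then have "[x * q ^ (i + (m - k)) = x * q ^ m] (mod ?N)"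
      using that by (simp add: mult.assoc flip: power_add)
    also have "[x * q ^ m = x * 1] (mod ?N)"
      by (intro cong_scalar_left power_cong_one_Mersenne assms(1))
    finally have "x * q ^ (i + (m - k)) mod ?N = x"
      using assms(2) by (simp add: cong_def)
    with rotate_ne[of "i + (m - k)"] that show False
      by simp
  qed
  have "inj_on (\<lambda>j. x * q ^ j mod ?N) {..<m}"
    by (rule inj_onI) (metis lessThan_iff linorder_neqE_nat neq)
  then have "card ((\<lambda>j. x * q ^ j mod ?N) ` {..<m}) = m"
    by (simp add: card_image)
  then show ?thesis
    unfolding cyc_coset_eq_image[OF assms(1) \<open>m \<ge> 1\<close>] .
qed

lemma card_cyc_coset_complement:
  fixes q m y :: nat
  assumes "q \<ge> 1" and "0 < y" and "y < q ^ m - 1"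
    and "\<And>j. 0 < j \<Longrightarrow> j < m \<Longrightarrow> y * q ^ j mod (q ^ m - 1) < y"
  shows "card (cyc_coset q (q ^ m - 1) (q ^ m - 1 - y)) = m"
proof (rule card_cyc_coset)
  fix j
  assume "0 < j" "j < m"
  then have "y * q ^ j mod (q ^ m - 1) < y"
    by (rule assms(4))
  then show "(q ^ m - 1 - y) * q ^ j mod (q ^ m - 1) \<noteq> q ^ m - 1 - y"
    using assms(3) by (simp only: complement_mult_power_mod[OF assms(1-3)])
qed (use assms in auto)

definition odd_coset_max :: "nat \<Rightarrow> nat \<Rightarrow> nat \<Rightarrow> bool" where
  "odd_coset_max q m y \<longleftrightarrow> odd y \<and> y < q ^ m - 1 \<and> (\<forall>j. y * q ^ j mod (q ^ m - 1) \<le> y)"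

lemma odd_coset_leaders_eq_image:
  fixes q m :: nat
  assumes "odd q"
  shows "odd_coset_leaders q (q ^ m - 1) = (\<lambda>y. q ^ m - 1 - y) ` {y. odd_coset_max q m y}"
proof -
  define N where "N = q ^ m - 1"
  have q1: "q \<ge> 1"
    using assms by (cases q) auto
  have "even N"
    using assms unfolding N_def by simp
  note max_def = odd_coset_max_def[of q m, folded N_def]
  note leader_iff = is_coset_leader_complement_iff[OF q1, of _ m, folded N_def]
  have "x \<in> odd_coset_leaders q N \<longleftrightarrow> x \<in> (\<lambda>y. N - y) ` {y. odd_coset_max q m y}" for x
  proof
    assume x: "x \<in> odd_coset_leaders q N"
    then have "x < N" "odd x" and leader: "is_coset_leader q N x"
      unfolding odd_coset_leaders_def is_coset_leader_def by auto
    moreover have "0 < x"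
      using \<open>odd x\<close> by (rule odd_pos)
    ultimately have "0 < N - x" "N - x < N" "x = N - (N - x)" "odd (N - x)"
      using \<open>even N\<close> by auto
    with leader leader_iff[of "N - x"] have "odd_coset_max q m (N - x)"
      unfolding max_def by simp
    with \<open>x = N - (N - x)\<close> show "x \<in> (\<lambda>y. N - y) ` {y. odd_coset_max q m y}"
      by blast
  next
    assume "x \<in> (\<lambda>y. N - y) ` {y. odd_coset_max q m y}"
    then obtain y where "x = N - y" "odd y" "y < N" and max: "\<forall>j. y * q ^ j mod N \<le> y"
      unfolding max_def by auto
    moreover from this have "odd x" "is_coset_leader q N x"
      using \<open>even N\<close> leader_iff[of y] by (auto intro: odd_pos)
    ultimately show "x \<in> odd_coset_leaders q N"
      unfolding odd_coset_leaders_def by simp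
  qed
  then show ?thesis
    unfolding N_def by blast
qed

lemma odd_coset_maxI:
  fixes q m y :: nat
  assumes "q \<ge> 1" and "odd y" and "y < q ^ m - 1"
    and "\<And>j. 0 < j \<Longrightarrow> j < m \<Longrightarrow> y * q ^ j mod (q ^ m - 1) \<le> y"
  shows "odd_coset_max q m y"
  unfolding odd_coset_max_def
proof (intro conjI allI assms(2,3))
  fix j
  have "y * q ^ j mod (q ^ m - 1) = y * q ^ (j mod m) mod (q ^ m - 1)"
    using assms(1) by (rule mult_power_mod_Mersenne_mod)
  moreover have "j mod m < m"
    using assms(3) by (cases m) auto
  ultimately show "y * q ^ j mod (q ^ m - 1) \<le> y"
    using assms(3) assms(4)[of "j mod m"] by (cases "j mod m = 0") auto
qed

lemma odd_coset_max_pow_sum: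
  assumes "odd q" and "q \<ge> 3" and "m \<ge> 1" and "A \<subseteq> {..<m}"
    and "odd (card A)" and "rotation_maximal q m A"
  shows "odd_coset_max q m (pow_sum q A)"
  unfolding odd_coset_max_def
proof (intro conjI allI)
  show "odd (pow_sum q A)"
    using assms(1,4,5) odd_pow_sum_iff finite_subset by blast
  show "pow_sum q A < q ^ m - 1"
    using assms(2-4) by (rule pow_sum_less_Mersenne)
  show "pow_sum q A * q ^ j mod (q ^ m - 1) \<le> pow_sum q A" for j
    using assms(6) unfolding rotation_maximal_def pow_sum_mult_power_mod[OF assms(2-4)] by blast
qed

lemma card_cyc_coset_pow_sum:
  assumes "q \<ge> 3" and "m \<ge> 1" and "A \<subseteq> {..<m}" and "A \<noteq> {}"
    and "\<And>j. 0 < j \<Longrightarrow> j < m \<Longrightarrow> pow_sum q (rotate_set m j A) < pow_sum q A"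
  shows "card (cyc_coset q (q ^ m - 1) (q ^ m - 1 - pow_sum q A)) = m"
proof (rule card_cyc_coset_complement)
  obtain e where "e \<in> A"
    using assms(4) by blast
  then have "q ^ e \<le> pow_sum q A"
    using assms(3) finite_subset by (blast intro: power_le_pow_sum)
  then show "0 < pow_sum q A"
    using assms(1) by (metis le_less_trans less_le_trans zero_less_numeral zero_less_power not_le)
  show "pow_sum q A < q ^ m - 1"
    using assms(1-3) by (rule pow_sum_less_Mersenne)
  show "pow_sum q A * q ^ j mod (q ^ m - 1) < pow_sum q A" if "0 < j" "j < m" for j
    using assms(5)[OF that] unfolding pow_sum_mult_power_mod[OF assms(1-3)] .
qed (use assms(1) in simp)

lemma odd_coset_max_exponent_set:
  assumes "odd q" and "q \<ge> 3" and max: "odd_coset_max q m y" and "y < 2 * q ^ (m - 1)"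
  obtains A where "A \<subseteq> {..<m}" "m - 1 \<in> A" "odd (card A)" "rotation_maximal q m A"
    "y = pow_sum q A"
proof -
  have "odd y" and y_less: "y < q ^ m - 1" and rotate_le: "\<And>j. y * q ^ j mod (q ^ m - 1) \<le> y"
    using max unfolding odd_coset_max_def by auto
  have "m \<ge> 1"
    using y_less by (cases m) auto
  have "y div q ^ (m - 1) < 2"
    using assms(2,4) by (simp add: div_less_iff_less_mult mult.commute)
  then have lead: "y div q ^ (m - 1) \<le> 1"
    by simp
  have digit_le: "y div q ^ i mod q \<le> y div q ^ (m - 1)" if "i < m" for i
    using assms(2) y_less that rotate_le by (intro digit_le_leading_digit) auto
  define A where "A = {i. i < m \<and> y div q ^ i mod q = 1}"
  have "y = pow_sum q A"
    unfolding A_def using assms(2) y_less digit_le lead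
    by (intro eq_pow_sum_binary_digits) (auto intro: le_trans)
  moreover have A_sub: "A \<subseteq> {..<m}"
    unfolding A_def by auto
  moreover have "odd (card A)"
    using \<open>odd y\<close> \<open>y = pow_sum q A\<close> odd_pow_sum_iff[OF assms(1)] A_sub finite_subset by blast
  moreover have "m - 1 \<in> A"
  proof (rule ccontr)
    assume "m - 1 \<notin> A"
    then have "y div q ^ (m - 1) = 0"
      using lead assms(2) \<open>m \<ge> 1\<close> unfolding A_def by (auto simp: le_Suc_eq)
    then have "A = {}"
      using digit_le unfolding A_def by fastforce
    then show False
      using \<open>odd y\<close> \<open>y = pow_sum q A\<close> by simp
  qed
  moreover have "rotation_maximal q m A"
    unfolding rotation_maximal_def
    using rotate_le pow_sum_mult_power_mod[OF assms(2) \<open>m \<ge> 1\<close> A_sub] \<open>y = pow_sum q A\<close> by metis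
  ultimately show ?thesis
    using that by blast
qed

lemma odd_coset_max_top:
  assumes "odd q" and "q \<ge> 3" and "m \<ge> 1"
  shows "odd_coset_max q m (q ^ (m - 1))"
  using odd_coset_max_pow_sum[OF assms, of "{m - 1}"] rotation_maximal_top[of q m] assms(2,3)
  by (simp add: pow_sum_def)

lemma kth_largest_three:
  fixes S :: "nat set"
  assumes "finite S" and "d \<in> S" "d2 \<in> S" "d1 \<in> S" and "d < d2" "d2 < d1"
    and above: "\<forall>x\<in>S. d < x \<longrightarrow> x = d1 \<or> x = d2"
  shows "card S \<ge> 3" and "kth_largest 3 S = d"
proof -
  define S1 where "S1 = {x \<in> S. x < d}"
  have "finite S1"
    unfolding S1_def using assms(1) by simp
  define xs where "xs = sorted_list_of_set S1 @ [d, d2, d1]"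
  have "S = S1 \<union> {d, d2, d1}"
    using above assms(2-4) unfolding S1_def by (auto simp: not_less_iff_gr_or_eq)
  then have "set xs = S"
    unfolding xs_def using \<open>finite S1\<close> by simp
  moreover have "sorted xs" "distinct xs"
    unfolding xs_def using \<open>finite S1\<close> assms(5,6) by (auto simp: sorted_append S1_def)
  ultimately have "sorted_list_of_set S = xs"
    using assms(1) by (intro sorted_distinct_set_unique) auto
  then show "kth_largest 3 S = d"
    unfolding kth_largest_def xs_def by simp
  have "card {d, d2, d1} \<le> card S"
    using assms(1-4) by (intro card_mono) auto
  then show "card S \<ge> 3"
    using assms(5,6) by simp
qed

lemma third_largest_odd_coset_leaderI:
  fixes q m Y2 Y3 :: nat
  assumes "odd q" and "q \<ge> 3" and "m \<ge> 1" and "q ^ (m - 1) < Y2" and "Y2 < Y3"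
    and "odd_coset_max q m Y2" and "odd_coset_max q m Y3"
    and "card (cyc_coset q (q ^ m - 1) (q ^ m - 1 - Y3)) = m"
    and below: "\<And>y. odd_coset_max q m y \<Longrightarrow> y < Y3 \<Longrightarrow> y = q ^ (m - 1) \<or> y = Y2"
  shows "card (odd_coset_leaders q (q ^ m - 1)) \<ge> 3
    \<and> kth_largest 3 (odd_coset_leaders q (q ^ m - 1)) = q ^ m - 1 - Y3
    \<and> card (cyc_coset q (q ^ m - 1) (kth_largest 3 (odd_coset_leaders q (q ^ m - 1)))) = m"
proof -
  define N where "N = q ^ m - 1"
  define S where "S = odd_coset_leaders q N"
  have S_eq: "S = (\<lambda>y. N - y) ` {y. odd_coset_max q m y}"
    unfolding S_def N_def using assms(1) by (rule odd_coset_leaders_eq_image)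
  have less_N: "y < N" if "odd_coset_max q m y" for y
    using that unfolding odd_coset_max_def N_def by simp
  have "odd_coset_max q m (q ^ (m - 1))"
    using assms(1-3) by (rule odd_coset_max_top)
  then have mem: "N - q ^ (m - 1) \<in> S" "N - Y2 \<in> S" "N - Y3 \<in> S"
    using assms(6,7) unfolding S_eq by auto
  have "{y. odd_coset_max q m y} \<subseteq> {..<N}"
    using less_N by auto
  then have "finite S"
    unfolding S_eq by (auto intro: finite_subset)
  have "\<forall>x\<in>S. N - Y3 < x \<longrightarrow> x = N - q ^ (m - 1) \<or> x = N - Y2"
    unfolding S_eq using below less_N assms(7) by fastforce
  moreover have "N - Y3 < N - Y2" "N - Y2 < N - q ^ (m - 1)"
    using assms(4,5) less_N[OF assms(7)] by linarith+
  ultimately have "card S \<ge> 3" "kth_largest 3 S = N - Y3"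
    using kth_largest_three[OF \<open>finite S\<close> mem(3,2,1)] by blast+
  then show ?thesis
    using assms(8) unfolding S_def N_def by simp
qed

lemma odd_coset_max_below_cases:
  assumes "odd q" and "q \<ge> 3" and max: "odd_coset_max q m y" and "y < Y"
    and "Y \<le> 2 * q ^ (m - 1) + 1"
    and classify: "\<And>A. A \<subseteq> {..<m} \<Longrightarrow> m - 1 \<in> A \<Longrightarrow> A \<noteq> {m - 1} \<Longrightarrow> odd (card A)
      \<Longrightarrow> rotation_maximal q m A \<Longrightarrow> pow_sum q A < Y \<Longrightarrow> A = A2"
  shows "y = q ^ (m - 1) \<or> y = pow_sum q A2"
proof -
  have "odd y"
    using max unfolding odd_coset_max_def by simp
  then have "y \<noteq> 2 * q ^ (m - 1)"
    by auto
  then have "y < 2 * q ^ (m - 1)"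
    using assms(4,5) by linarith
  with assms(1,2) max obtain A where "A \<subseteq> {..<m}" "m - 1 \<in> A" "odd (card A)"
    "rotation_maximal q m A" and y: "y = pow_sum q A"
    by (rule odd_coset_max_exponent_set)
  then show ?thesis
    using classify assms(4) by (cases "A = {m - 1}") (auto simp: pow_sum_def)
qed

section \<open>Rotation-maximal exponent sets\<close>

text \<open>Rotating \<open>e\<close> to the top position moves \<open>x\<close> to position \<open>m - 1 - t\<close>, where \<open>t\<close> is
  the cyclic distance from \<open>x\<close> to \<open>e\<close>; maximality forces this position below \<open>p + 1\<close>.\<close>

lemma rotation_maximal_gap:
  assumes "q \<ge> 2" and A: "A \<subseteq> {..<m}" and "m - 1 \<in> A" and "p < m - 1"
    and second: "\<forall>i\<in>A. i \<noteq> m - 1 \<longrightarrow> i \<le> p" and "rotation_maximal q m A"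
    and "x \<in> A" and "e \<in> A" and "x \<noteq> e"
  shows "m \<le> (e + m - x) mod m + p + 1"
proof -
  define t where "t = (e + m - x) mod m"
  have "x < m" "e < m"
    using assms(7,8) A by auto
  have "(x + (m - 1 - e)) mod m = m - 1 - t"
    unfolding t_def using \<open>x < m\<close> \<open>e < m\<close> assms(9) by (rule rotate_to_top_position)
  moreover have "(e + (m - 1 - e)) mod m = m - 1"
    using \<open>e < m\<close> by simp
  ultimately have sub: "{m - 1, m - 1 - t} \<subseteq> rotate_set m (m - 1 - e) A"
    unfolding rotate_set_def using assms(7,8) by (metis empty_subsetI image_eqI insert_subset)
  have "0 < t" "t < m"
    unfolding t_def using \<open>x < m\<close> \<open>e < m\<close> assms(9) by (auto simp: mod_if)
  then have "q ^ (m - 1) + q ^ (m - 1 - t) = pow_sum q {m - 1, m - 1 - t}"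
    by (simp add: pow_sum_def)
  also have "\<dots> \<le> pow_sum q (rotate_set m (m - 1 - e) A)"
    using sub finite_subset[OF rotate_set_subset, of m] \<open>e < m\<close> by (intro pow_sum_mono) auto
  also have "\<dots> \<le> pow_sum q A"
    using assms(6) unfolding rotation_maximal_def by blast
  also have "\<dots> < q ^ (m - 1) + q ^ (p + 1)"
    using assms(1,2,4) second by (rule pow_sum_less_top_two)
  finally have "q ^ (m - 1 - t) < q ^ (p + 1)"
    by simp
  then have "m - 1 - t < p + 1"
    by (rule power_less_imp_less_exp[rotated]) (use assms(1) in simp)
  then show ?thesis
    unfolding t_def by linarith
qed

lemma rotation_maximal_decompose:
  assumes "q \<ge> 2" and A: "A \<subseteq> {..<m}" and top: "m - 1 \<in> A" and "A \<noteq> {m - 1}"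
    and max: "rotation_maximal q m A"
  obtains p L where "A = insert (m - 1) (insert p L)" "p < m - 1"
    "\<forall>e\<in>L. e < p \<and> m \<le> e + p + 2 \<and> e + m \<le> 2 * p + 1"
proof -
  have fin: "finite (A - {m - 1})" and ne: "A - {m - 1} \<noteq> {}"
    using A finite_subset assms(3,4) by blast+
  define p where "p = Max (A - {m - 1})"
  define L where "L = A - {m - 1, p}"
  have "p \<in> A" "p \<noteq> m - 1" "p < m"
    using Max_in[OF fin ne] A unfolding p_def by auto
  then have "p < m - 1"
    by linarith
  have second: "\<forall>i\<in>A. i \<noteq> m - 1 \<longrightarrow> i \<le> p"
    unfolding p_def using fin by simp
  have "e < p \<and> m \<le> e + p + 2 \<and> e + m \<le> 2 * p + 1" if "e \<in> L" for e
  proof -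
    have "e \<in> A" "e < p"
      using that second unfolding L_def by fastforce+
    have "m \<le> (e + m - (m - 1)) mod m + p + 1"
      using assms(1) A top \<open>p < m - 1\<close> second max top \<open>e \<in> A\<close>
      by (rule rotation_maximal_gap) (use \<open>e < p\<close> \<open>p < m - 1\<close> in simp)
    moreover have "(e + m - (m - 1)) mod m = e + 1"
      using \<open>e < p\<close> \<open>p < m - 1\<close> by simp
    moreover have "m \<le> (p + m - e) mod m + p + 1"
      using assms(1) A top \<open>p < m - 1\<close> second max \<open>e \<in> A\<close> \<open>p \<in> A\<close>
      by (rule rotation_maximal_gap) (use \<open>e < p\<close> in simp)
    moreover have "(p + m - e) mod m = p - e"
      using \<open>e < p\<close> \<open>p < m - 1\<close> by (simp add: mod_if)
    ultimately show ?thesis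
      using \<open>e < p\<close> by simp
  qed
  moreover have "A = insert (m - 1) (insert p L)"
    unfolding L_def using top \<open>p \<in> A\<close> by auto
  ultimately show ?thesis
    using \<open>p < m - 1\<close> that by blast
qed

lemma odd_card_subset_doubleton:
  assumes "L \<subseteq> {c, d}" and "odd (card L)"
  shows "L = {c} \<or> L = {d}"
proof -
  have "card L \<le> card {c, d}"
    using assms(1) by (rule card_mono[rotated]) simp
  also have "\<dots> \<le> 2"
    by (simp add: card_insert_le_m1)
  finally have "card L = 1"
    using assms(2) by presburger
  then obtain x where "L = {x}"
    by (rule card_1_singletonE)
  then show ?thesis
    using assms(1) by auto
qed

lemma rotation_maximal_decompose_below:
  assumes "q \<ge> 2" and A: "A \<subseteq> {..<m}" and "m - 1 \<in> A" and "A \<noteq> {m - 1}"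
    and "odd (card A)" and "rotation_maximal q m A"
    and "b < a" and below: "pow_sum q A < q ^ (m - 1) + q ^ a + q ^ b"
  obtains p L where "A = insert (m - 1) (insert p L)" "p \<le> a" "odd (card L)"
    "\<And>e. e \<in> L \<Longrightarrow> m \<le> e + p + 2 \<and> e + m \<le> 2 * p + 1 \<and> (p = a \<longrightarrow> e < b)"
proof -
  obtain p L where A_eq: "A = insert (m - 1) (insert p L)" and "p < m - 1"
    and gaps: "\<forall>e\<in>L. e < p \<and> m \<le> e + p + 2 \<and> e + m \<le> 2 * p + 1"
    using assms(1-4,6) by (rule rotation_maximal_decompose)
  have "finite L"
    using A A_eq finite_subset by auto
  moreover have "m - 1 \<notin> insert p L" "p \<notin> L"
    using \<open>p < m - 1\<close> gaps by auto
  ultimately have "card A = card L + 2" and sum: "pow_sum q A = q ^ (m - 1) + (q ^ p + pow_sum q L)"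
    unfolding A_eq by simp_all
  then have "odd (card L)"
    using assms(5) by simp
  have "q ^ p + pow_sum q L < q ^ a + q ^ b"
    using below sum by simp
  note bounds = exponent_bounds_below_two_powers[OF assms(1,7) this]
  show ?thesis
    using gaps bounds(2)[OF _ \<open>finite L\<close>] by (intro that[OF A_eq bounds(1) \<open>odd (card L)\<close>]) auto
qed

lemma rotate_set_three_to_top:
  fixes m u v :: nat
  assumes "v < u" and "u < m - 1"
  shows "rotate_set m (m - 1 - u) {m - 1, u, v} = {m - 1, m - 1 - u + v, m - 2 - u}"
    and "rotate_set m (m - 1 - v) {m - 1, u, v} = {m - 1, m - 2 - v, u - v - 1}"
proof -
  have "(m - 1 + (m - 1 - u)) mod m = m - 2 - u" "(v + (m - 1 - u)) mod m = m - 1 - u + v"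
    "(m - 1 + (m - 1 - v)) mod m = m - 2 - v" "(u + (m - 1 - v)) mod m = u - v - 1"
    using assms by (auto simp: mod_if)
  moreover have "(u + (m - 1 - u)) mod m = m - 1" "(v + (m - 1 - v)) mod m = m - 1"
    using assms by simp_all
  ultimately show "rotate_set m (m - 1 - u) {m - 1, u, v} = {m - 1, m - 1 - u + v, m - 2 - u}"
    and "rotate_set m (m - 1 - v) {m - 1, u, v} = {m - 1, m - 2 - v, u - v - 1}"
    unfolding rotate_set_def image_insert image_empty by (simp_all only: insert_commute)
qed

lemma rotate_set_three_cases:
  fixes m u v j :: nat
  assumes "v < u" and "u < m - 1" and "j < m"
  shows "j = 0 \<or> j = m - 1 - u \<or> j = m - 1 - v \<or> rotate_set m j {m - 1, u, v} \<subseteq> {..<m - 1}"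
proof (cases "m - 1 \<in> rotate_set m j {m - 1, u, v}")
  case True
  then obtain x where x: "x \<in> {m - 1, u, v}" "m - 1 = (x + j) mod m"
    unfolding rotate_set_def by (rule imageE)
  then have "x < m"
    using assms(1,2) by auto
  then have "j = m - 1 - x"
    using assms(3) x(2)[symmetric] by (rule rotate_to_top_unique)
  then show ?thesis
    using x(1) by auto
next
  case False
  have "rotate_set m j {m - 1, u, v} \<subseteq> {..<m}"
    using assms(2) by (intro rotate_set_subset) simp
  then have "rotate_set m j {m - 1, u, v} \<subseteq> {..<m - 1}"
    using False by (rule subset_lessThan_pred)
  then show ?thesis
    by simp
qed

lemma pow_sum_rotate_three_to_top_iff:
  fixes q m u v :: nat
  assumes "q \<ge> 2" and "v < u" and "u < m - 1"
  defines "S \<equiv> {m - 1, u, v}"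
  shows "pow_sum q (rotate_set m (m - 1 - u) S) \<le> pow_sum q S \<longleftrightarrow> (m - 1 - u + v, m - 2 - u) \<le> (u, v)"
    and "pow_sum q (rotate_set m (m - 1 - v) S) \<le> pow_sum q S \<longleftrightarrow> (m - 2 - v, u - v - 1) \<le> (u, v)"
    and "pow_sum q (rotate_set m (m - 1 - u) S) < pow_sum q S \<longleftrightarrow> (m - 1 - u + v, m - 2 - u) < (u, v)"
    and "pow_sum q (rotate_set m (m - 1 - v) S) < pow_sum q S \<longleftrightarrow> (m - 2 - v, u - v - 1) < (u, v)"
proof -
  have ord: "m - 2 - u < m - 1 - u + v" "m - 1 - u + v < m - 1" "u - v - 1 < m - 2 - v"
    "m - 2 - v < m - 1"
    using assms(2,3) by linarith+
  show "pow_sum q (rotate_set m (m - 1 - u) S) \<le> pow_sum q S \<longleftrightarrow> (m - 1 - u + v, m - 2 - u) \<le> (u, v)"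
    and "pow_sum q (rotate_set m (m - 1 - v) S) \<le> pow_sum q S \<longleftrightarrow> (m - 2 - v, u - v - 1) \<le> (u, v)"
    and "pow_sum q (rotate_set m (m - 1 - u) S) < pow_sum q S \<longleftrightarrow> (m - 1 - u + v, m - 2 - u) < (u, v)"
    and "pow_sum q (rotate_set m (m - 1 - v) S) < pow_sum q S \<longleftrightarrow> (m - 2 - v, u - v - 1) < (u, v)"
    unfolding S_def rotate_set_three_to_top[OF assms(2,3)]
    using pow_sum_three_le_iff[OF assms(1-3) ord(1,2)] pow_sum_three_le_iff[OF assms(1-3) ord(3,4)]
      pow_sum_three_less_iff[OF assms(1-3) ord(1,2)] pow_sum_three_less_iff[OF assms(1-3) ord(3,4)]
    by blast+
qed

lemma pow_sum_rotate_three_le: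
  fixes q m u v j :: nat
  assumes "q \<ge> 2" and "v < u" and "u < m - 1"
    and "(m - 1 - u + v, m - 2 - u) \<le> (u, v)" and "(m - 2 - v, u - v - 1) \<le> (u, v)"
    and "j < m"
  shows "pow_sum q (rotate_set m j {m - 1, u, v}) \<le> pow_sum q {m - 1, u, v}"
  using rotate_set_three_cases[OF assms(2,3,6)]
proof (elim disjE)
  assume "j = 0"
  moreover have "{m - 1, u, v} \<subseteq> {..<m}"
    using assms(2,3) by auto
  ultimately show ?thesis
    by (simp only: rotate_set_zero order_refl)
next
  assume "rotate_set m j {m - 1, u, v} \<subseteq> {..<m - 1}"
  then have "pow_sum q (rotate_set m j {m - 1, u, v}) < pow_sum q {m - 1, u, v}"
    by (rule pow_sum_below_less[OF assms(1)]) auto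
  then show ?thesis
    by simp
qed (simp_all only: pow_sum_rotate_three_to_top_iff[OF assms(1-3)] assms(4,5))

lemma pow_sum_rotate_three_less:
  fixes q m u v j :: nat
  assumes "q \<ge> 2" and "v < u" and "u < m - 1"
    and "(m - 1 - u + v, m - 2 - u) < (u, v)" and "(m - 2 - v, u - v - 1) < (u, v)"
    and "0 < j" and "j < m"
  shows "pow_sum q (rotate_set m j {m - 1, u, v}) < pow_sum q {m - 1, u, v}"
  using rotate_set_three_cases[OF assms(2,3,7)]
proof (elim disjE)
  assume "rotate_set m j {m - 1, u, v} \<subseteq> {..<m - 1}"
  then show ?thesis
    by (rule pow_sum_below_less[OF assms(1)]) auto
qed (use assms(6) in \<open>simp_all only: pow_sum_rotate_three_to_top_iff[OF assms(1-3)] assms(4,5)\<close>)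

lemma rotation_maximal_three_iff:
  fixes q m u v :: nat
  assumes "q \<ge> 2" and "v < u" and "u < m - 1"
  shows "rotation_maximal q m {m - 1, u, v} \<longleftrightarrow>
    (m - 1 - u + v, m - 2 - u) \<le> (u, v) \<and> (m - 2 - v, u - v - 1) \<le> (u, v)"
proof
  assume "rotation_maximal q m {m - 1, u, v}"
  then show "(m - 1 - u + v, m - 2 - u) \<le> (u, v) \<and> (m - 2 - v, u - v - 1) \<le> (u, v)"
    unfolding rotation_maximal_def pow_sum_rotate_three_to_top_iff(1,2)[OF assms, symmetric] by blast
next
  assume "(m - 1 - u + v, m - 2 - u) \<le> (u, v) \<and> (m - 2 - v, u - v - 1) \<le> (u, v)"
  then have "pow_sum q (rotate_set m (j mod m) {m - 1, u, v}) \<le> pow_sum q {m - 1, u, v}" for j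
    using assms by (intro pow_sum_rotate_three_le) auto
  then show "rotation_maximal q m {m - 1, u, v}"
    unfolding rotation_maximal_def by (simp add: rotate_set_mod)
qed

lemma not_rotation_maximal_three:
  assumes "q \<ge> 2" and "v < u" and "u + v + 2 = m" and "2 * v + 1 < u"
  shows "\<not> rotation_maximal q m {m - 1, u, v}"
proof -
  have "u < m - 1"
    using assms(3) by simp
  moreover have "\<not> (m - 2 - v, u - v - 1) \<le> (u, v)"
    using assms(3,4) by (simp only: less_eq_prod_simp) linarith
  ultimately show ?thesis
    using rotation_maximal_three_iff[OF assms(1,2)] by blast
qed

lemma not_rotation_maximal_three_insert:
  assumes "q \<ge> 2" and "odd (card L)" and "\<forall>e\<in>L. e = v"
    and "v < p" and "p + v + 2 = m" and "2 * v + 1 < p"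
  shows "\<not> rotation_maximal q m (insert (m - 1) (insert p L))"
proof -
  have "L = {v}"
    using odd_card_subset_doubleton[of L v v] assms(2,3) by auto
  then show ?thesis
    using not_rotation_maximal_three[OF assms(1,4-6)] by simp
qed

lemma rotation_maximal_below_mod0:
  assumes "q \<ge> 2" and "m = 3 * j" and "j \<ge> 1" and "A \<subseteq> {..<m}" and "m - 1 \<in> A"
    and "A \<noteq> {m - 1}" and "odd (card A)" and max: "rotation_maximal q m A"
    and "pow_sum q A < q ^ (m - 1) + q ^ (2 * j) + q ^ (j - 1)"
  shows "A = {m - 1, 2 * j - 1, j - 1}"
proof -
  have "j - 1 < 2 * j"
    using assms(3) by simp
  obtain p L where A: "A = insert (m - 1) (insert p L)" and "p \<le> 2 * j" "odd (card L)"
    and L: "\<And>e. e \<in> L \<Longrightarrow> m \<le> e + p + 2 \<and> e + m \<le> 2 * p + 1 \<and> (p = 2 * j \<longrightarrow> e < j - 1)"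
    using assms(1,4-8) \<open>j - 1 < 2 * j\<close> assms(9) by (rule rotation_maximal_decompose_below) blast
  obtain e where "e \<in> L"
    using \<open>odd (card L)\<close> by fastforce
  have "p \<noteq> 2 * j"
  proof
    assume "p = 2 * j"
    then have "\<forall>e'\<in>L. e' = j - 2" and "j \<ge> 2"
      using L L[OF \<open>e \<in> L\<close>] assms(2) by fastforce+
    with \<open>p = 2 * j\<close> show False
      using not_rotation_maximal_three_insert[OF assms(1) \<open>odd (card L)\<close>, of "j - 2" p m] max A assms(2)
      by simp
  qed
  then have "p = 2 * j - 1"
    using L[OF \<open>e \<in> L\<close>] \<open>p \<le> 2 * j\<close> assms(2) by linarith
  then have "L \<subseteq> {j - 1, j - 1}"
    using L assms(2) by fastforce
  then show ?thesis
    using odd_card_subset_doubleton[of L] \<open>odd (card L)\<close> A \<open>p = 2 * j - 1\<close> by auto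
qed

lemma rotation_maximal_below_mod1:
  assumes "q \<ge> 2" and "m = 3 * j + 1" and "j \<ge> 1" and "A \<subseteq> {..<m}" and "m - 1 \<in> A"
    and "A \<noteq> {m - 1}" and "odd (card A)" and max: "rotation_maximal q m A"
    and "pow_sum q A < q ^ (m - 1) + q ^ (2 * j + 1) + q ^ (j - 1)"
  shows "A = {m - 1, 2 * j, j}"
proof -
  have "j - 1 < 2 * j + 1"
    by simp
  obtain p L where A: "A = insert (m - 1) (insert p L)" and "p \<le> 2 * j + 1" "odd (card L)"
    and L: "\<And>e. e \<in> L \<Longrightarrow> m \<le> e + p + 2 \<and> e + m \<le> 2 * p + 1 \<and> (p = 2 * j + 1 \<longrightarrow> e < j - 1)"
    using assms(1,4-8) \<open>j - 1 < 2 * j + 1\<close> assms(9) by (rule rotation_maximal_decompose_below) blast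
  obtain e where "e \<in> L"
    using \<open>odd (card L)\<close> by fastforce
  have "p \<noteq> 2 * j + 1"
  proof
    assume "p = 2 * j + 1"
    then have "\<forall>e'\<in>L. e' = j - 2" and "j \<ge> 2"
      using L L[OF \<open>e \<in> L\<close>] assms(2) by fastforce+
    with \<open>p = 2 * j + 1\<close> show False
      using not_rotation_maximal_three_insert[OF assms(1) \<open>odd (card L)\<close>, of "j - 2" p m] max A assms(2)
      by simp
  qed
  then have "p = 2 * j"
    using L[OF \<open>e \<in> L\<close>] \<open>p \<le> 2 * j + 1\<close> assms(2) by linarith
  then have "L \<subseteq> {j, j - 1}"
    using L assms(2) by fastforce
  moreover have "L \<noteq> {j - 1}"
  proof
    assume "L = {j - 1}"
    moreover have "j - 1 < p" "p + (j - 1) + 2 = m" "2 * (j - 1) + 1 < p"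
      using \<open>p = 2 * j\<close> assms(2,3) by linarith+
    ultimately show False
      using not_rotation_maximal_three_insert[OF assms(1) \<open>odd (card L)\<close>] max A by auto
  qed
  ultimately show ?thesis
    using odd_card_subset_doubleton[of L] \<open>odd (card L)\<close> A \<open>p = 2 * j\<close> by auto
qed

lemma rotation_maximal_below_mod2:
  assumes "q \<ge> 2" and "m = 3 * j + 2" and "j \<ge> 1" and "A \<subseteq> {..<m}" and "m - 1 \<in> A"
    and "A \<noteq> {m - 1}" and "odd (card A)" and max: "rotation_maximal q m A"
    and "pow_sum q A < q ^ (m - 1) + q ^ (2 * j + 1) + q ^ (j + 1)"
  shows "A = {m - 1, 2 * j + 1, j}"
proof -
  have "j + 1 < 2 * j + 1"
    using assms(3) by simp
  obtain p L where A: "A = insert (m - 1) (insert p L)" and "p \<le> 2 * j + 1" "odd (card L)"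
    and L: "\<And>e. e \<in> L \<Longrightarrow> m \<le> e + p + 2 \<and> e + m \<le> 2 * p + 1 \<and> (p = 2 * j + 1 \<longrightarrow> e < j + 1)"
    using assms(1,4-8) \<open>j + 1 < 2 * j + 1\<close> assms(9) by (rule rotation_maximal_decompose_below) blast
  obtain e where "e \<in> L"
    using \<open>odd (card L)\<close> by fastforce
  then have "p = 2 * j + 1"
    using L[OF \<open>e \<in> L\<close>] \<open>p \<le> 2 * j + 1\<close> assms(2) by linarith
  then have "L \<subseteq> {j, j - 1}"
    using L assms(2) by fastforce
  moreover have "L \<noteq> {j - 1}"
  proof
    assume "L = {j - 1}"
    moreover have "j - 1 < p" "p + (j - 1) + 2 = m" "2 * (j - 1) + 1 < p"
      using \<open>p = 2 * j + 1\<close> assms(2,3) by linarith+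
    ultimately show False
      using not_rotation_maximal_three_insert[OF assms(1) \<open>odd (card L)\<close>] max A by auto
  qed
  ultimately show ?thesis
    using odd_card_subset_doubleton[of L] \<open>odd (card L)\<close> A \<open>p = 2 * j + 1\<close> by auto
qed

section \<open>The third largest odd coset leader\<close>

lemma odd_coset_max_three:
  assumes "odd q" and "q \<ge> 3" and "v < u" and "u < m - 1"
    and "(m - 1 - u + v, m - 2 - u) \<le> (u, v)" and "(m - 2 - v, u - v - 1) \<le> (u, v)"
  shows "odd_coset_max q m (q ^ (m - 1) + q ^ u + q ^ v)"
proof -
  have "rotation_maximal q m {m - 1, u, v}"
    using rotation_maximal_three_iff[of q v u m] assms(2-6) by simp
  then have "odd_coset_max q m (pow_sum q {m - 1, u, v})"
    using assms(3,4) by (intro odd_coset_max_pow_sum[OF assms(1,2)]) auto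
  then show ?thesis
    using assms(3,4) by (simp add: pow_sum_three)
qed

lemma card_cyc_coset_three:
  assumes "q \<ge> 3" and "v < u" and "u < m - 1"
    and "(m - 1 - u + v, m - 2 - u) < (u, v)" and "(m - 2 - v, u - v - 1) < (u, v)"
  shows "card (cyc_coset q (q ^ m - 1) (q ^ m - 1 - (q ^ (m - 1) + q ^ u + q ^ v))) = m"
proof -
  have "card (cyc_coset q (q ^ m - 1) (q ^ m - 1 - pow_sum q {m - 1, u, v})) = m"
    using assms(1-3) pow_sum_rotate_three_less[of q v u m] assms(4,5)
    by (intro card_cyc_coset_pow_sum) auto
  then show ?thesis
    using assms(2,3) by (simp add: pow_sum_three)
qed

lemma two_top_plus_one_less_Mersenne:
  fixes q m :: nat
  assumes "q \<ge> 3" and "m \<ge> 2"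
  shows "2 * q ^ (m - 1) + 1 < q ^ m - 1"
proof -
  have "q ^ m = q * q ^ (m - 1)"
    using assms(2) by (simp flip: power_Suc)
  moreover have "q ^ 1 \<le> q ^ (m - 1)"
    using assms by (intro power_increasing) auto
  then have "3 \<le> q ^ (m - 1)"
    using assms(1) by simp
  ultimately show ?thesis
    using assms(1) mult_le_mono1[of 3 q "q ^ (m - 1)"] by linarith
qed

lemma mult_power_mod_two_top_plus_one:
  fixes q m j :: nat
  assumes "q \<ge> 3" and "m \<ge> 2" and "0 < j" and "j < m"
  shows "(2 * q ^ (m - 1) + 1) * q ^ j mod (q ^ m - 1) = q ^ j + 2 * q ^ (j - 1)"
proof -
  define y where "y = 2 * q ^ (m - 1) + 1"
  have y_eq: "y = 1 + 2 * q ^ (j - 1) * q ^ (m - j)"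
    using assms(3,4) unfolding y_def by (simp flip: power_add)
  have "1 < q ^ (m - j)"
    using assms(1,4) by (intro one_less_power) auto
  have "y mod q ^ (m - j) = 1 mod q ^ (m - j)"
    unfolding y_eq by (rule mod_mult_self1)
  moreover have "y div q ^ (m - j) = 2 * q ^ (j - 1) + 1 div q ^ (m - j)"
    unfolding y_eq using \<open>1 < q ^ (m - j)\<close> by (intro div_mult_self1) linarith
  ultimately have "y mod q ^ (m - j) = 1" "y div q ^ (m - j) = 2 * q ^ (j - 1)"
    using \<open>1 < q ^ (m - j)\<close> assms(1,4) by simp_all
  moreover have "y < q ^ m - 1"
    unfolding y_def using assms(1,2) by (rule two_top_plus_one_less_Mersenne)
  ultimately show ?thesis
    using mult_power_mod_Mersenne[of q y m j] assms(1,4) unfolding y_def by simp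
qed

lemma odd_coset_max_two_top_plus_one:
  fixes q m :: nat
  assumes "q \<ge> 3" and "m \<ge> 2"
  shows "odd_coset_max q m (2 * q ^ (m - 1) + 1)"
    and "card (cyc_coset q (q ^ m - 1) (q ^ m - 1 - (2 * q ^ (m - 1) + 1))) = m"
proof -
  have less: "(2 * q ^ (m - 1) + 1) * q ^ j mod (q ^ m - 1) < 2 * q ^ (m - 1) + 1"
    if "0 < j" "j < m" for j
  proof -
    have "q ^ j + 2 * q ^ (j - 1) \<le> 2 * q ^ j"
      using assms(1) that(1) power_Suc[of q "j - 1"] by simp
    also have "\<dots> \<le> 2 * q ^ (m - 1)"
      using assms(1) that(2) by (simp add: power_increasing)
    finally show ?thesis
      using mult_power_mod_two_top_plus_one[OF assms that] by simp
  qed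
  have "2 * q ^ (m - 1) + 1 < q ^ m - 1"
    using assms by (rule two_top_plus_one_less_Mersenne)
  then show "odd_coset_max q m (2 * q ^ (m - 1) + 1)"
    using assms(1) less by (intro odd_coset_maxI) (auto intro: less_imp_le)
  show "card (cyc_coset q (q ^ m - 1) (q ^ m - 1 - (2 * q ^ (m - 1) + 1))) = m"
    using assms(1) \<open>2 * q ^ (m - 1) + 1 < q ^ m - 1\<close> less by (intro card_cyc_coset_complement) auto
qed

lemma third_largest_odd_coset_leader_by_classification:
  fixes q m u v Y :: nat
  assumes "odd q" and "q \<ge> 3" and "v < u" and "u < m - 1"
    and "(m - 1 - u + v, m - 2 - u) \<le> (u, v)" and "(m - 2 - v, u - v - 1) \<le> (u, v)"
    and "q ^ (m - 1) + q ^ u + q ^ v < Y" and "Y \<le> 2 * q ^ (m - 1) + 1"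
    and "odd_coset_max q m Y" and "card (cyc_coset q (q ^ m - 1) (q ^ m - 1 - Y)) = m"
    and classify: "\<And>A. A \<subseteq> {..<m} \<Longrightarrow> m - 1 \<in> A \<Longrightarrow> A \<noteq> {m - 1} \<Longrightarrow> odd (card A)
      \<Longrightarrow> rotation_maximal q m A \<Longrightarrow> pow_sum q A < Y \<Longrightarrow> A = {m - 1, u, v}"
  shows "card (odd_coset_leaders q (q ^ m - 1)) \<ge> 3
    \<and> kth_largest 3 (odd_coset_leaders q (q ^ m - 1)) = q ^ m - 1 - Y
    \<and> card (cyc_coset q (q ^ m - 1) (kth_largest 3 (odd_coset_leaders q (q ^ m - 1)))) = m"
proof (rule third_largest_odd_coset_leaderI[OF assms(1,2) _ _ assms(7)])
  show "m \<ge> 1" "q ^ (m - 1) < q ^ (m - 1) + q ^ u + q ^ v"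
    using assms(2,4) by simp_all
  show "odd_coset_max q m (q ^ (m - 1) + q ^ u + q ^ v)"
    using assms(1-6) by (rule odd_coset_max_three)
  show "y = q ^ (m - 1) \<or> y = q ^ (m - 1) + q ^ u + q ^ v" if "odd_coset_max q m y" "y < Y" for y
    using odd_coset_max_below_cases[OF assms(1,2) that assms(8) classify] assms(3,4)
    by (simp add: pow_sum_three)
qed (use assms(9,10) in simp_all)

lemma third_largest_odd_coset_leader_mod0:
  fixes q m j :: nat
  assumes "odd q" and "q \<ge> 3" and "m = 3 * j" and "j \<ge> 1"
  defines "Y \<equiv> q ^ (m - 1) + q ^ (2 * j) + q ^ (j - 1)"
  shows "card (odd_coset_leaders q (q ^ m - 1)) \<ge> 3
    \<and> kth_largest 3 (odd_coset_leaders q (q ^ m - 1)) = q ^ m - 1 - Y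
    \<and> card (cyc_coset q (q ^ m - 1) (kth_largest 3 (odd_coset_leaders q (q ^ m - 1)))) = m"
proof (rule third_largest_odd_coset_leader_by_classification[OF assms(1,2), of "j - 1" "2 * j - 1"])
  have "odd_coset_max q m Y \<and> card (cyc_coset q (q ^ m - 1) (q ^ m - 1 - Y)) = m"
  proof (cases "j = 1")
    case True
    then have "Y = 2 * q ^ (m - 1) + 1" "m \<ge> 2"
      unfolding Y_def using assms(3) by simp_all
    then show ?thesis
      using odd_coset_max_two_top_plus_one[OF assms(2)] by simp
  next
    case False
    then have "j - 1 < 2 * j" "2 * j < m - 1" "(m - 1 - 2 * j + (j - 1), m - 2 - 2 * j) < (2 * j, j - 1)"
      "(m - 2 - (j - 1), 2 * j - (j - 1) - 1) < (2 * j, j - 1)"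
      using assms(3,4) by auto
    then show ?thesis
      using odd_coset_max_three[OF assms(1,2)] card_cyc_coset_three[OF assms(2)] less_imp_le
      unfolding Y_def by blast
  qed
  then show "odd_coset_max q m Y" "card (cyc_coset q (q ^ m - 1) (q ^ m - 1 - Y)) = m"
    by simp_all
  show "j - 1 < 2 * j - 1" "2 * j - 1 < m - 1"
    "(m - 1 - (2 * j - 1) + (j - 1), m - 2 - (2 * j - 1)) \<le> (2 * j - 1, j - 1)"
    "(m - 2 - (j - 1), 2 * j - 1 - (j - 1) - 1) \<le> (2 * j - 1, j - 1)"
    using assms(3,4) by auto
  show "q ^ (m - 1) + q ^ (2 * j - 1) + q ^ (j - 1) < Y"
    unfolding Y_def using assms(2,4) by (simp add: power_strict_increasing)
  show "Y \<le> 2 * q ^ (m - 1) + 1"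
    unfolding Y_def using assms(2-4) by (intro three_powers_le_two_top_plus_one) auto
  show "A = {m - 1, 2 * j - 1, j - 1}"
    if "A \<subseteq> {..<m}" "m - 1 \<in> A" "A \<noteq> {m - 1}" "odd (card A)" "rotation_maximal q m A"
      "pow_sum q A < Y" for A
    using rotation_maximal_below_mod0[of q m j A] that assms(2-4) unfolding Y_def by simp
qed

lemma third_largest_odd_coset_leader_mod1:
  fixes q m j :: nat
  assumes "odd q" and "q \<ge> 3" and "m = 3 * j + 1" and "j \<ge> 1"
  defines "Y \<equiv> q ^ (m - 1) + q ^ (2 * j + 1) + q ^ (j - 1)"
  shows "card (odd_coset_leaders q (q ^ m - 1)) \<ge> 3
    \<and> kth_largest 3 (odd_coset_leaders q (q ^ m - 1)) = q ^ m - 1 - Y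
    \<and> card (cyc_coset q (q ^ m - 1) (kth_largest 3 (odd_coset_leaders q (q ^ m - 1)))) = m"
proof (rule third_largest_odd_coset_leader_by_classification[OF assms(1,2), of j "2 * j"])
  have "odd_coset_max q m Y \<and> card (cyc_coset q (q ^ m - 1) (q ^ m - 1 - Y)) = m"
  proof (cases "j = 1")
    case True
    then have "Y = 2 * q ^ (m - 1) + 1" "m \<ge> 2"
      unfolding Y_def using assms(3) by simp_all
    then show ?thesis
      using odd_coset_max_two_top_plus_one[OF assms(2)] by simp
  next
    case False
    then have "j - 1 < 2 * j + 1" "2 * j + 1 < m - 1"
      "(m - 1 - (2 * j + 1) + (j - 1), m - 2 - (2 * j + 1)) < (2 * j + 1, j - 1)"
      "(m - 2 - (j - 1), 2 * j + 1 - (j - 1) - 1) < (2 * j + 1, j - 1)"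
      using assms(3,4) by auto
    then show ?thesis
      using odd_coset_max_three[OF assms(1,2)] card_cyc_coset_three[OF assms(2)] less_imp_le
      unfolding Y_def by blast
  qed
  then show "odd_coset_max q m Y" "card (cyc_coset q (q ^ m - 1) (q ^ m - 1 - Y)) = m"
    by simp_all
  show "j < 2 * j" "2 * j < m - 1"
    "(m - 1 - 2 * j + j, m - 2 - 2 * j) \<le> (2 * j, j)"
    "(m - 2 - j, 2 * j - j - 1) \<le> (2 * j, j)"
    using assms(3,4) by auto
  have "q ^ j \<le> q ^ (2 * j)" "0 < q ^ (2 * j)"
    using assms(2) by (simp_all add: power_increasing)
  moreover have "3 * q ^ (2 * j) \<le> q ^ (2 * j + 1)"
    using mult_le_mono1[OF assms(2), of "q ^ (2 * j)"] by simp
  ultimately show "q ^ (m - 1) + q ^ (2 * j) + q ^ j < Y"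
    unfolding Y_def by linarith
  show "Y \<le> 2 * q ^ (m - 1) + 1"
    unfolding Y_def using assms(2-4) by (intro three_powers_le_two_top_plus_one) auto
  show "A = {m - 1, 2 * j, j}"
    if "A \<subseteq> {..<m}" "m - 1 \<in> A" "A \<noteq> {m - 1}" "odd (card A)" "rotation_maximal q m A"
      "pow_sum q A < Y" for A
    using rotation_maximal_below_mod1[of q m j A] that assms(2-4) unfolding Y_def by simp
qed

lemma third_largest_odd_coset_leader_mod2:
  fixes q m j :: nat
  assumes "odd q" and "q \<ge> 3" and "m = 3 * j + 2" and "j \<ge> 1"
  defines "Y \<equiv> q ^ (m - 1) + q ^ (2 * j + 1) + q ^ (j + 1)"
  shows "card (odd_coset_leaders q (q ^ m - 1)) \<ge> 3
    \<and> kth_largest 3 (odd_coset_leaders q (q ^ m - 1)) = q ^ m - 1 - Y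
    \<and> card (cyc_coset q (q ^ m - 1) (kth_largest 3 (odd_coset_leaders q (q ^ m - 1)))) = m"
proof (rule third_largest_odd_coset_leader_by_classification[OF assms(1,2), of j "2 * j + 1"])
  have "j + 1 < 2 * j + 1" "2 * j + 1 < m - 1"
    "(m - 1 - (2 * j + 1) + (j + 1), m - 2 - (2 * j + 1)) < (2 * j + 1, j + 1)"
    "(m - 2 - (j + 1), 2 * j + 1 - (j + 1) - 1) < (2 * j + 1, j + 1)"
    using assms(3,4) by auto
  then show "odd_coset_max q m Y" "card (cyc_coset q (q ^ m - 1) (q ^ m - 1 - Y)) = m"
    using odd_coset_max_three[OF assms(1,2)] card_cyc_coset_three[OF assms(2)] less_imp_le
    unfolding Y_def by blast+
  show "j < 2 * j + 1" "2 * j + 1 < m - 1"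
    "(m - 1 - (2 * j + 1) + j, m - 2 - (2 * j + 1)) \<le> (2 * j + 1, j)"
    "(m - 2 - j, 2 * j + 1 - j - 1) \<le> (2 * j + 1, j)"
    using assms(3,4) by auto
  show "q ^ (m - 1) + q ^ (2 * j + 1) + q ^ j < Y"
    unfolding Y_def using assms(2) by (simp add: power_strict_increasing)
  show "Y \<le> 2 * q ^ (m - 1) + 1"
    unfolding Y_def using assms(2-4) by (intro three_powers_le_two_top_plus_one) auto
  show "A = {m - 1, 2 * j + 1, j}"
    if "A \<subseteq> {..<m}" "m - 1 \<in> A" "A \<noteq> {m - 1}" "odd (card A)" "rotation_maximal q m A"
      "pow_sum q A < Y" for A
    using rotation_maximal_below_mod2[of q m j A] that assms(2-4) unfolding Y_def by simp
qed

lemma odd_coset_max_three_q: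
  fixes q :: nat
  assumes "odd q" and "q \<ge> 5"
  shows "odd_coset_max q 2 (3 * q)" and "card (cyc_coset q (q ^ 2 - 1) (q ^ 2 - 1 - 3 * q)) = 2"
proof -
  have "5 * q \<le> q ^ 2"
    using assms(2) by (simp add: power2_eq_square)
  then have "3 * q < q ^ 2 - 1"
    using assms(2) by linarith
  have less: "3 * q * q ^ j mod (q ^ 2 - 1) < 3 * q" if "0 < j" "j < 2" for j
  proof -
    have "j = 1"
      using that by simp
    then show ?thesis
      using mult_power_mod_Mersenne[of q "3 * q" 2 1] \<open>3 * q < q ^ 2 - 1\<close> assms(2) by simp
  qed
  have "odd (3 * q)"
    using assms(1) by simp
  then show "odd_coset_max q 2 (3 * q)"
    using assms(2) \<open>3 * q < q ^ 2 - 1\<close> less by (intro odd_coset_maxI) (auto intro: less_imp_le)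
  show "card (cyc_coset q (q ^ 2 - 1) (q ^ 2 - 1 - 3 * q)) = 2"
    using assms(2) \<open>3 * q < q ^ 2 - 1\<close> less by (intro card_cyc_coset_complement) auto
qed

lemma odd_coset_max_m2_below:
  fixes q y :: nat
  assumes "odd q" and "q \<ge> 3" and max: "odd_coset_max q 2 y" and "y < 3 * q"
  shows "y = q \<or> y = 2 * q + 1"
proof -
  have "odd y" "y < q ^ 2 - 1" and rotate_le: "\<forall>j. y * q ^ j mod (q ^ 2 - 1) \<le> y"
    using max unfolding odd_coset_max_def by auto
  then have "y div q ^ 0 mod q \<le> y div q ^ (2 - 1)"
    using assms(2) rotate_le[rule_format, of "2 - 1 - 0"] by (intro digit_le_leading_digit) auto
  moreover define d r where "d = y div q" and "r = y mod q"
  ultimately have "r \<le> d"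
    by simp
  moreover have "d < 3"
    unfolding d_def using assms(2,4) by (simp add: div_less_iff_less_mult)
  ultimately have "(d, r) \<in> {(0, 0), (1, 0), (1, 1), (2, 0), (2, 1), (2, 2)}"
    by (auto simp: numeral_3_eq_3 less_Suc_eq le_Suc_eq)
  moreover have "y = d * q + r"
    unfolding d_def r_def by simp
  ultimately show ?thesis
    using \<open>odd y\<close> assms(1) by auto
qed

text \<open>For \<open>m = 2\<close> the third smallest odd coset maximum \<open>3 * q\<close> has the digit 3, so it is
  not a sum of distinct powers of \<open>q\<close>.\<close>

lemma third_largest_odd_coset_leader_m2:
  fixes q :: nat
  assumes "odd q" and "q \<ge> 5"
  shows "card (odd_coset_leaders q (q ^ 2 - 1)) \<ge> 3
    \<and> kth_largest 3 (odd_coset_leaders q (q ^ 2 - 1)) = q ^ 2 - 1 - 3 * q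
    \<and> card (cyc_coset q (q ^ 2 - 1) (kth_largest 3 (odd_coset_leaders q (q ^ 2 - 1)))) = 2"
proof -
  have "q \<ge> 3"
    using assms(2) by simp
  then show ?thesis
    using third_largest_odd_coset_leaderI[OF assms(1) \<open>q \<ge> 3\<close>, of 2 "2 * q + 1" "3 * q"]
      odd_coset_max_two_top_plus_one[OF \<open>q \<ge> 3\<close>, of 2] odd_coset_max_three_q[OF assms]
      odd_coset_max_m2_below[OF assms(1) \<open>q \<ge> 3\<close>] assms(2)
    by simp
qed

lemma Mersenne_minus_three_powers:
  fixes q m A B :: nat
  assumes "m \<ge> 1"
  shows "(q - 1) * q ^ (m - 1) - A - B - 1 = q ^ m - 1 - (q ^ (m - 1) + A + B)"
proof -
  have "q ^ m = q * q ^ (m - 1)"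
    using assms by (simp flip: power_Suc)
  then have "(q - 1) * q ^ (m - 1) = q ^ m - q ^ (m - 1)"
    by (simp add: diff_mult_distrib)
  then show ?thesis
    by simp
qed

lemma nat_ge_two_mod_three_cases:
  fixes m :: nat
  assumes "m \<ge> 2"
  obtains "m = 2" | j where "m = 3 * j" "j \<ge> 1" | j where "m = 3 * j + 1" "j \<ge> 1"
    | j where "m = 3 * j + 2" "j \<ge> 1"
proof -
  have "m = 2 \<or> (\<exists>j\<ge>1. m = 3 * j) \<or> (\<exists>j\<ge>1. m = 3 * j + 1) \<or> (\<exists>j\<ge>1. m = 3 * j + 2)"
    using assms by presburger
  then show ?thesis
    using that by blast
qed

theorem lemma20:
  fixes q m :: nat
  assumes "\<exists>p k. prime p \<and> k \<ge> 1 \<and> q = p ^ k"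
    and "odd q" and "q \<ge> 3"
    and "m \<ge> 2" and "q ^ m \<ge> 25"
  shows "card (odd_coset_leaders q (q ^ m - 1)) \<ge> 3
    \<and> kth_largest 3 (odd_coset_leaders q (q ^ m - 1)) =
      (if \<not> 3 dvd (m + 1)
       then (q - 1) * q ^ (m - 1) - q ^ ((2 * m + 1) div 3) - q ^ (m div 3 - 1) - 1
       else (q - 1) * q ^ (m - 1) - q ^ ((2 * m - 1) div 3) - q ^ ((m + 1) div 3) - 1)
    \<and> card (cyc_coset q (q ^ m - 1) (kth_largest 3 (odd_coset_leaders q (q ^ m - 1)))) = m"
proof -
  have delta: "(q - 1) * q ^ (m - 1) - A - B - 1 = q ^ m - 1 - (q ^ (m - 1) + A + B)" for A B
    using assms(4) by (intro Mersenne_minus_three_powers) simp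
  from assms(4) show ?thesis
  proof (cases rule: nat_ge_two_mod_three_cases)
    case 1
    then have "q \<ge> 5"
      using assms(2,5) power_mono[of q 4 2] by (cases "q \<ge> 5") (auto simp: even_iff_mod_2_eq_zero)
    have formula: "(\<not> 3 dvd (m + 1)) = False" "(2 * m - 1) div 3 = 1" "(m + 1) div 3 = 1"
      "q ^ m - 1 - (q ^ (m - 1) + q ^ 1 + q ^ 1) = q ^ m - 1 - 3 * q"
      using 1 by simp_all
    show ?thesis
      unfolding formula if_False delta formula(4)
      by (rule third_largest_odd_coset_leader_m2[OF assms(2) \<open>q \<ge> 5\<close>, folded 1])
  next
    case (2 j)
    then have formula: "(\<not> 3 dvd (m + 1)) = True" "(2 * m + 1) div 3 = 2 * j" "m div 3 - 1 = j - 1"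
      by presburger+
    show ?thesis
      unfolding formula if_True delta by (rule third_largest_odd_coset_leader_mod0[OF assms(2,3) 2])
  next
    case (3 j)
    then have formula: "(\<not> 3 dvd (m + 1)) = True" "(2 * m + 1) div 3 = 2 * j + 1" "m div 3 - 1 = j - 1"
      by presburger+
    show ?thesis
      unfolding formula if_True delta by (rule third_largest_odd_coset_leader_mod1[OF assms(2,3) 3])
  next
    case (4 j)
    then have formula: "(\<not> 3 dvd (m + 1)) = False" "(2 * m - 1) div 3 = 2 * j + 1" "(m + 1) div 3 = j + 1"
      by presburger+
    show ?thesis
      unfolding formula if_False delta by (rule third_largest_odd_coset_leader_mod2[OF assms(2,3) 4])
  qed
qed

end
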